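(* Let $\sigma>0$, $H\in(3/4,1)$, and let $(\Omega,\mathcal{F},P)$ carry a standard Brownian motion $B$ and an independent fractional Brownian motion $Z^H$ with Hurst parameter $H$ (so $Z^H_1,B_1$ are independent $N(0,1)$ under $P$). For $\alpha>0$ let $S^{H,\alpha}_0=1$ and $S^{H,\alpha}_1=\exp\big(\sigma(Z^H_1+\frac1\alpha B_1)-\frac{\sigma^2}{2\alpha^2}\big)$. Let $X=\exp(\sigma Z^H_1)$, $h(x)=\frac{1}{\sqrt{2\pi}\sigma x}\exp\big(-\frac12(\frac{\ln x}{\sigma})^2\big)$ for $x>0$ (the density of $X$ under $P$), $g(x)=e^{-x}/h(x)$, and define $\tilde P$ on $(\Omega,\mathcal{F})$ by $\frac{d\tilde P}{dP}=g(X)$. Then: (1) $\tilde P$ is a probability measure equivalent to $P$; (2) $E_{\tilde P}[S^{H,\alpha}_1]=1=S^{H,\alpha}_0$ for every $\alpha>0$; (3) letting $M^{H,\alpha}_1=\alpha Z^H_1+B_1$, $Q^{\alpha,1}$ the law of $M^{H,\alpha}_1$ under $P$ and $\tilde Q^{\alpha,1}$ its law under $\tilde P$ (both on $\mathbb{R}$), the families $(\tilde Q^{\alpha,1})_{\alpha>0}$ and $(Q^{\alpha,1})_{\alpha>0}$ are mutually contiguous as $\alpha\to\infty$: for any family of Borel sets $A^\alpha\subset\mathbb{R}$, $Q^{\alpha,1}(A^\alpha)\to0$ as $\alpha\to\infty$ if and only if $\tilde Q^{\alpha,1}(A^\alpha)\to0$ as $\alpha\to\infty$.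
   Context: A fractional Brownian motion with Hurst parameter $H$ is a continuous centred Gaussian process with covariance $\frac12(t^{2H}+s^{2H}-|t-s|^{2H})$. *)

theory Defs
  imports "HOL-Probability.Probability"
begin

definition fbm_cov :: "real \<Rightarrow> real \<Rightarrow> real \<Rightarrow> real" where
  "fbm_cov H t s = (1/2) * (t powr (2*H) + s powr (2*H) - \<bar>t - s\<bar> powr (2*H))"

text \<open>A continuous centred Gaussian process on [0,\<infinity>) with covariance K, on the probability
  space M. Gaussianity of all finite-dimensional distributions (with mean zero and covariance K)
  is expressed via their joint characteristic functions.\<close>
definition centred_gaussian_process ::
  "'a measure \<Rightarrow> (real \<Rightarrow> real \<Rightarrow> real) \<Rightarrow> (real \<Rightarrow> 'a \<Rightarrow> real) \<Rightarrow> bool" where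
  "centred_gaussian_process M K X \<longleftrightarrow>
     (\<forall>t\<ge>0. X t \<in> borel_measurable M) \<and>
     (\<forall>\<omega>\<in>space M. continuous_on {0..} (\<lambda>t. X t \<omega>)) \<and>
     (\<forall>T c. finite T \<longrightarrow> T \<subseteq> {0..} \<longrightarrow>
        (CLINT \<omega>|M. iexp (\<Sum>t\<in>T. c t * X t \<omega>)) =
          complex_of_real (exp (-(1/2) * (\<Sum>s\<in>T. \<Sum>t\<in>T. c s * c t * K s t))))"

definition fBm :: "'a measure \<Rightarrow> real \<Rightarrow> (real \<Rightarrow> 'a \<Rightarrow> real) \<Rightarrow> bool" where
  "fBm M H Z \<longleftrightarrow> centred_gaussian_process M (fbm_cov H) Z"

definition standard_BM :: "'a measure \<Rightarrow> (real \<Rightarrow> 'a \<Rightarrow> real) \<Rightarrow> bool" where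
  "standard_BM M B \<longleftrightarrow> centred_gaussian_process M (\<lambda>s t. min s t) B"

definition path :: "(real \<Rightarrow> 'a \<Rightarrow> real) \<Rightarrow> 'a \<Rightarrow> (real \<Rightarrow> real)" where
  "path X \<omega> = restrict (\<lambda>t. X t \<omega>) {0..}"

definition path_space :: "(real \<Rightarrow> real) measure" where
  "path_space = PiM {0..} (\<lambda>_. borel)"

definition hdens :: "real \<Rightarrow> real \<Rightarrow> real" where
  "hdens \<sigma> x = 1 / (sqrt (2*pi) * \<sigma> * x) * exp (-(1/2) * (ln x / \<sigma>)^2)"

definition gfun :: "real \<Rightarrow> real \<Rightarrow> real" where
  "gfun \<sigma> x = exp (-x) / hdens \<sigma> x"

end

theory Submission
  imports Defs "HOL-Real_Asymp.Real_Asymp"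
begin

text \<open>Under \<open>P\<close>, \<open>Z\<^sup>H\<^sub>1\<close> and \<open>B\<^sub>1\<close> are independent standard normal variables (Levy's uniqueness
  theorem applied to the defining characteristic functions). The weight \<open>g(X)\<close> is the ratio of
  the \<open>Exp(1)\<close> density to the lognormal law of \<open>X = exp (\<sigma> Z\<^sup>H\<^sub>1)\<close>, so under \<open>P~\<close> the variable \<open>X\<close>
  is exponential with mean 1 while \<open>B\<^sub>1\<close> is still standard normal and independent of it; hence
  \<open>E\<^sub>P\<^sub>~[S\<^sub>1] = E[X] * E[exp (\<sigma>/\<alpha> B\<^sub>1 - \<sigma>\<^sup>2/(2\<alpha>\<^sup>2))] = 1\<close>.
  Contiguity holds for the image laws of any family of random variables: \<open>g(X)\<close> is a strictly
  positive \<open>P\<close>-integrable density and \<open>1 / g(X)\<close> is \<open>P~\<close>-integrable, and an integrable density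
  is uniformly integrable, so the events of vanishing probability are the same for both measures.\<close>

lemma measure_density_eq_integral:
  fixes w :: "'a \<Rightarrow> real"
  assumes "integrable M w" "\<And>x. x \<in> space M \<Longrightarrow> 0 \<le> w x" "E \<in> sets M"
  shows "measure (density M w) E = (\<integral>x. w x * indicator E x \<partial>M)"
proof -
  have "measure (density M w) E = (\<integral>x. indicator E x \<partial>density M w)"
    using assms by (simp add: emeasure_density less_top[symmetric] ennreal_indicator
        nn_integral_eq_integral integrable_real_mult_indicator)
  also have "\<dots> = (\<integral>x. w x * indicator E x \<partial>M)"
    using assms by (subst integral_density) auto
  finally show ?thesis .
qed

lemma emeasure_density_space_eq_integral:
  fixes w :: "'a \<Rightarrow> real"
  assumes "integrable M w" "\<And>x. x \<in> space M \<Longrightarrow> 0 \<le> w x"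
  shows "emeasure (density M w) (space M) = ennreal (\<integral>x. w x \<partial>M)"
proof -
  have "emeasure (density M w) (space M) = (\<integral>\<^sup>+x. ennreal (w x) * indicator (space M) x \<partial>M)"
    using assms(1) by (intro emeasure_density) auto
  also have "\<dots> = (\<integral>\<^sup>+x. ennreal (w x) \<partial>M)"
    by (intro nn_integral_cong) simp
  also have "\<dots> = ennreal (\<integral>x. w x \<partial>M)"
    using assms by (intro nn_integral_eq_integral) auto
  finally show ?thesis .
qed

lemma tendsto_integral_excess_zero:
  fixes w :: "'a \<Rightarrow> real"
  assumes "integrable M w"
  shows "(\<lambda>n. \<integral>x. max (w x - real n) 0 \<partial>M) \<longlonglongrightarrow> 0"
proof -
  have "(\<lambda>n. \<integral>x. max (w x - real n) 0 \<partial>M) \<longlonglongrightarrow> (\<integral>x. 0 \<partial>M)"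
  proof (rule integral_dominated_convergence[where w = "\<lambda>x. \<bar>w x\<bar>"])
    show "AE x in M. (\<lambda>n. max (w x - real n) 0) \<longlonglongrightarrow> 0"
    proof (rule AE_I2, rule tendsto_eventually)
      fix x
      obtain N :: nat where "w x \<le> real N" using real_arch_simple by blast
      then show "\<forall>\<^sub>F n in sequentially. max (w x - real n) 0 = 0"
        unfolding eventually_sequentially by (auto intro!: exI[of _ N])
    qed
  qed (use assms in auto)
  then show ?thesis by simp
qed

lemma measure_density_le_excess:
  fixes w :: "'a \<Rightarrow> real"
  assumes "finite_measure M" "integrable M w" "\<And>x. x \<in> space M \<Longrightarrow> 0 \<le> w x" "A \<in> sets M"
  shows "measure (density M w) A \<le> real n * measure M A + (\<integral>x. max (w x - real n) 0 \<partial>M)"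
proof -
  have int_excess: "integrable M (\<lambda>x. max (w x - real n) 0)"
    using assms by (intro Bochner_Integration.integrable_bound[OF assms(2)]) auto
  have int_A: "integrable M (indicator A :: 'a \<Rightarrow> real)"
    using assms(1,4) by (simp add: finite_measure.emeasure_finite less_top[symmetric])
  have "measure (density M w) A = (\<integral>x. w x * indicator A x \<partial>M)"
    using assms(2-4) by (rule measure_density_eq_integral)
  also have "\<dots> \<le> (\<integral>x. real n * indicator A x + max (w x - real n) 0 \<partial>M)"
  proof (rule integral_mono)
    show "integrable M (\<lambda>x. w x * indicator A x)"
      by (rule integrable_real_mult_indicator[OF assms(4,2)])
    show "integrable M (\<lambda>x. real n * indicator A x + max (w x - real n) 0)"
      using int_A int_excess by simp
  qed (auto simp: indicator_def)
  also have "\<dots> = real n * measure M A + (\<integral>x. max (w x - real n) 0 \<partial>M)"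
    using int_excess int_A assms(4) by (simp add: Int_absorb2 sets.sets_into_space)
  finally show ?thesis .
qed

text \<open>An integrable density is uniformly integrable: the density measure of \<open>E\<close> is at most
  \<open>n * measure M E\<close> plus the mass of \<open>w\<close> above the level \<open>n\<close>, which is small for large \<open>n\<close>.\<close>
lemma tendsto_measure_density_zero:
  fixes w :: "'a \<Rightarrow> real" and E :: "'b \<Rightarrow> 'a set"
  assumes M: "finite_measure M" and w: "integrable M w" "\<And>x. x \<in> space M \<Longrightarrow> 0 \<le> w x"
    and E: "\<forall>\<^sub>F a in F. E a \<in> sets M" and lim: "((\<lambda>a. measure M (E a)) \<longlongrightarrow> 0) F"
  shows "((\<lambda>a. measure (density M w) (E a)) \<longlongrightarrow> 0) F"
proof (rule tendstoI)
  fix e :: real assume "0 < e"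
  then obtain n where n: "(\<integral>x. max (w x - real n) 0 \<partial>M) < e/2"
    using order_tendstoD(2)[OF tendsto_integral_excess_zero[OF w(1)], of "e/2"]
    by (auto simp: eventually_sequentially)
  have "\<forall>\<^sub>F a in F. measure M (E a) < e / (2 * (real n + 1))"
    using order_tendstoD(2)[OF lim] \<open>0 < e\<close> by simp
  with E show "\<forall>\<^sub>F a in F. dist (measure (density M w) (E a)) 0 < e"
  proof eventually_elim
    case (elim a)
    have "real n * measure M (E a) \<le> (real n + 1) * measure M (E a)"
      by (simp add: mult_right_mono)
    also have "\<dots> < e/2"
      using elim(2) by (simp add: field_simps)
    finally have "measure (density M w) (E a) < e"
      using measure_density_le_excess[OF M w elim(1), of n] n by linarith
    then show ?case by (simp only: dist_real_def diff_zero abs_of_nonneg[OF measure_nonneg])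
  qed
qed

lemma density_density_inverse:
  fixes w :: "'a \<Rightarrow> real"
  assumes "w \<in> borel_measurable M" "\<And>x. x \<in> space M \<Longrightarrow> 0 < w x"
  shows "density (density M w) (\<lambda>x. 1 / w x) = M"
proof -
  have "density (density M w) (\<lambda>x. 1 / w x) = density M (\<lambda>x. ennreal (w x) * ennreal (1 / w x))"
    using assms by (intro density_density_eq) auto
  also have "\<dots> = density M (\<lambda>_. 1)"
  proof (intro density_cong AE_I2)
    show "ennreal (w x) * ennreal (1 / w x) = 1" if "x \<in> space M" for x
      using assms(2)[OF that] by (simp flip: ennreal_mult)
  qed (use assms in auto)
  finally show ?thesis by (simp add: density_1)
qed

text \<open>The converse direction is the forward one for \<open>density M w\<close>, whose reverse density \<open>1 / w\<close>
  is integrable with integral \<open>measure M (space M)\<close>.\<close>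
lemma tendsto_measure_density_zero_iff:
  fixes w :: "'a \<Rightarrow> real" and E :: "'b \<Rightarrow> 'a set"
  assumes M: "finite_measure M" and w: "integrable M w" "\<And>x. x \<in> space M \<Longrightarrow> 0 < w x"
    and E: "\<forall>\<^sub>F a in F. E a \<in> sets M"
  shows "((\<lambda>a. measure M (E a)) \<longlongrightarrow> 0) F \<longleftrightarrow> ((\<lambda>a. measure (density M w) (E a)) \<longlongrightarrow> 0) F"
proof
  have w_nonneg: "\<And>x. x \<in> space M \<Longrightarrow> 0 \<le> w x" using w(2) by (simp add: less_imp_le)
  show "((\<lambda>a. measure (density M w) (E a)) \<longlongrightarrow> 0) F" if "((\<lambda>a. measure M (E a)) \<longlongrightarrow> 0) F"
    by (rule tendsto_measure_density_zero[OF M w(1) w_nonneg E that])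
next
  assume lim: "((\<lambda>a. measure (density M w) (E a)) \<longlongrightarrow> 0) F"
  have wm: "w \<in> borel_measurable M" using w by auto
  have "emeasure (density M w) (space (density M w)) = ennreal (\<integral>x. w x \<partial>M)"
    using emeasure_density_space_eq_integral[OF w(1)] w(2) by (simp add: less_imp_le)
  then have fin: "finite_measure (density M w)" by (intro finite_measureI) simp
  have "integrable M (\<lambda>x. w x *\<^sub>R (1 / w x))"
  proof (rule Bochner_Integration.integrable_cong[THEN iffD1, OF refl _
        finite_measure.integrable_const[OF M]])
    show "1 = w x *\<^sub>R (1 / w x)" if "x \<in> space M" for x
      using w(2)[OF that] by simp
  qed
  moreover have "(\<lambda>x. 1 / w x) \<in> borel_measurable M" using wm by measurable
  moreover have "AE x in M. 0 \<le> w x" using w(2) by (simp add: less_imp_le)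
  ultimately have int: "integrable (density M w) (\<lambda>x. 1 / w x)"
    using integrable_density[OF _ wm] by blast
  have nonneg: "\<And>x. x \<in> space (density M w) \<Longrightarrow> 0 \<le> 1 / w x"
    using w(2) by (simp add: less_imp_le)
  have "\<forall>\<^sub>F a in F. E a \<in> sets (density M w)" using E by simp
  from tendsto_measure_density_zero[OF fin int nonneg this lim]
  show "((\<lambda>a. measure M (E a)) \<longlongrightarrow> 0) F"
    by (simp only: density_density_inverse[OF wm w(2)])
qed

lemma prob_space_density_equivalent:
  fixes w :: "'a \<Rightarrow> real"
  assumes "prob_space M" and w: "integrable M w" "\<And>x. x \<in> space M \<Longrightarrow> 0 < w x"
    and "(\<integral>x. w x \<partial>M) = 1"
  shows "prob_space (density M w)" "absolutely_continuous M (density M w)"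
    "absolutely_continuous (density M w) M"
proof -
  have wm: "w \<in> borel_measurable M" using w by auto
  show "prob_space (density M w)"
    using assms by (intro prob_spaceI) (simp add: emeasure_density_space_eq_integral less_imp_le)
  show "absolutely_continuous M (density M w)"
    using wm by (intro absolutely_continuousI_density) simp
  have "absolutely_continuous (density M w) (density (density M w) (\<lambda>x. 1 / w x))"
    using wm by (intro absolutely_continuousI_density) simp
  then show "absolutely_continuous (density M w) M"
    using wm w(2) by (simp add: density_density_inverse)
qed

lemma tendsto_measure_distr_density_zero_iff:
  fixes w :: "'a \<Rightarrow> real" and X :: "'b \<Rightarrow> 'a \<Rightarrow> 'c"
  assumes "finite_measure M" "integrable M w" "\<And>x. x \<in> space M \<Longrightarrow> 0 < w x"
    and X: "\<And>a. X a \<in> measurable M N" and A: "\<forall>\<^sub>F a in F. A a \<in> sets N"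
  shows "((\<lambda>a. measure (distr M N (X a)) (A a)) \<longlongrightarrow> 0) F \<longleftrightarrow>
    ((\<lambda>a. measure (distr (density M w) N (X a)) (A a)) \<longlongrightarrow> 0) F"
proof -
  let ?E = "\<lambda>a. X a -` A a \<inter> space M"
  have "\<forall>\<^sub>F a in F. measure (distr M N (X a)) (A a) = measure M (?E a)"
    using A by eventually_elim (use X in \<open>simp add: measure_distr\<close>)
  then have "((\<lambda>a. measure (distr M N (X a)) (A a)) \<longlongrightarrow> 0) F \<longleftrightarrow> ((\<lambda>a. measure M (?E a)) \<longlongrightarrow> 0) F"
    by (rule tendsto_cong)
  also have "\<dots> \<longleftrightarrow> ((\<lambda>a. measure (density M w) (?E a)) \<longlongrightarrow> 0) F"
  proof (rule tendsto_measure_density_zero_iff[OF assms(1-3)])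
    show "\<forall>\<^sub>F a in F. ?E a \<in> sets M"
      using A by eventually_elim (rule measurable_sets[OF X])
  qed
  also have "\<dots> \<longleftrightarrow> ((\<lambda>a. measure (distr (density M w) N (X a)) (A a)) \<longlongrightarrow> 0) F"
  proof (rule tendsto_cong)
    show "\<forall>\<^sub>F a in F. measure (density M w) (?E a) = measure (distr (density M w) N (X a)) (A a)"
      using A
    proof eventually_elim
      case (elim a)
      have "X a \<in> measurable (density M w) N" using X by simp
      from measure_distr[OF this elim] show ?case by simp
    qed
  qed
  finally show ?thesis .
qed

lemma (in prob_space) centred_gaussian_process_distributed:
  assumes G: "centred_gaussian_process M K X" and t: "0 \<le> t" and K: "K t t = 1"
  shows "distributed M lborel (X t) std_normal_density"
proof -
  have Xt: "X t \<in> borel_measurable M"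
    using G t unfolding centred_gaussian_process_def by auto
  have "char (distr M borel (X t)) u = char std_normal_distribution u" for u
  proof -
    have "char (distr M borel (X t)) u = (CLINT \<omega>|M. iexp (u * X t \<omega>))"
      unfolding char_def using Xt by (subst integral_distr) auto
    also have "\<dots> = complex_of_real (exp (- (u^2) / 2))"
      using G t K unfolding centred_gaussian_process_def
      by (auto dest!: spec[of _ "{t}"] spec[of _ "\<lambda>_. u"] simp: power2_eq_square)
    finally show ?thesis by (simp add: char_std_normal_distribution)
  qed
  then have "distr M borel (X t) = std_normal_distribution"
    using Xt by (intro Levy_uniqueness real_distribution_distr real_dist_normal_dist) auto
  moreover have "distr M lborel (X t) = distr M borel (X t)"
    by (rule distr_cong) simp_all
  ultimately show ?thesis
    using Xt unfolding distributed_def by simp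
qed

lemma (in prob_space) fBm_distributed_one:
  "fBm M H Z \<Longrightarrow> distributed M lborel (Z 1) std_normal_density"
  unfolding fBm_def
  by (rule centred_gaussian_process_distributed[where K = "fbm_cov H"]) (simp_all add: fbm_cov_def)

lemma (in prob_space) standard_BM_distributed_one:
  "standard_BM M B \<Longrightarrow> distributed M lborel (B 1) std_normal_density"
  unfolding standard_BM_def
  by (rule centred_gaussian_process_distributed[where K = "\<lambda>s t. min s t"]) simp_all

lemma (in prob_space) indep_var_path_eval:
  assumes "indep_var path_space (path Z) path_space (path B)" "0 \<le> s" "0 \<le> t"
  shows "indep_var borel (Z s) borel (B t)"
proof -
  have "(\<lambda>p. p r) \<in> measurable path_space borel" if "0 \<le> r" for r
    using that unfolding path_space_def by (intro measurable_component_singleton) simp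
  from indep_var_compose[OF assms(1) this this, OF assms(2,3)] show ?thesis
    using assms(2,3) by (simp add: comp_def path_def)
qed

lemma lborel_integral_FTC_nonneg:
  fixes f F :: "real \<Rightarrow> real"
  assumes F: "\<And>x. DERIV F x :> f x" and f: "\<And>x. isCont f x" "\<And>x. 0 \<le> f x"
    and a: "(F \<longlongrightarrow> a) at_bot" and b: "(F \<longlongrightarrow> b) at_top"
  shows "integrable lborel f" "(\<integral>x. f x \<partial>lborel) = b - a"
proof -
  have "((F \<circ> real_of_ereal) \<longlongrightarrow> a) (at_right (-\<infinity>))" "((F \<circ> real_of_ereal) \<longlongrightarrow> b) (at_left \<infinity>)"
    using a b by (simp_all add: ereal_tendsto_simps1)
  note FTC = interval_integral_FTC_nonneg[of "-\<infinity>" \<infinity> F f, OF _ F f(1) _ this]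
  show "integrable lborel f"
    using FTC(1) f(2) by (simp add: set_integrable_def)
  show "(\<integral>x. f x \<partial>lborel) = b - a"
    using FTC(2) f(2) by (simp add: interval_lebesgue_integral_def set_lebesgue_integral_def)
qed

text \<open>\<open>s * exp (s * z) * exp (- exp (s * z))\<close> is the density of \<open>ln E / s\<close> for \<open>E\<close> exponentially
  distributed with mean 1; the two integrals below are the total mass and the mean of \<open>E\<close>.\<close>
lemma gumbel_density_integral:
  fixes s :: real assumes "0 < s"
  shows "integrable lborel (\<lambda>z. s * exp (s*z) * exp (- exp (s*z)))"
    "(\<integral>z. s * exp (s*z) * exp (- exp (s*z)) \<partial>lborel) = 1"
proof -
  have "DERIV (\<lambda>z. - exp (- exp (s*z))) x :> s * exp (s*x) * exp (- exp (s*x))" for x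
    by (auto intro!: derivative_eq_intros)
  moreover have "((\<lambda>z. - exp (- exp (s*z))) \<longlongrightarrow> -1) at_bot" "((\<lambda>z. - exp (- exp (s*z))) \<longlongrightarrow> 0) at_top"
    using \<open>0 < s\<close> by real_asymp+
  ultimately have FTC: "integrable lborel (\<lambda>z. s * exp (s*z) * exp (- exp (s*z)))"
    "(\<integral>z. s * exp (s*z) * exp (- exp (s*z)) \<partial>lborel) = 0 - (-1)"
    using \<open>0 < s\<close> by (intro lborel_integral_FTC_nonneg; auto intro!: continuous_intros)+
  then show "integrable lborel (\<lambda>z. s * exp (s*z) * exp (- exp (s*z)))"
    "(\<integral>z. s * exp (s*z) * exp (- exp (s*z)) \<partial>lborel) = 1"
    by simp_all
qed

lemma gumbel_density_exp_integral:
  fixes s :: real assumes "0 < s"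
  shows "integrable lborel (\<lambda>z. s * exp (s*z) * exp (- exp (s*z)) * exp (s*z))"
    "(\<integral>z. s * exp (s*z) * exp (- exp (s*z)) * exp (s*z) \<partial>lborel) = 1"
proof -
  have "DERIV (\<lambda>z. - (1 + exp (s*z)) * exp (- exp (s*z))) x
      :> s * exp (s*x) * exp (- exp (s*x)) * exp (s*x)" for x
    by (auto intro!: derivative_eq_intros simp: algebra_simps)
  moreover have "((\<lambda>z. - (1 + exp (s*z)) * exp (- exp (s*z))) \<longlongrightarrow> -1) at_bot"
    "((\<lambda>z. - (1 + exp (s*z)) * exp (- exp (s*z))) \<longlongrightarrow> 0) at_top"
    using \<open>0 < s\<close> by real_asymp+
  ultimately have FTC: "integrable lborel (\<lambda>z. s * exp (s*z) * exp (- exp (s*z)) * exp (s*z))"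
    "(\<integral>z. s * exp (s*z) * exp (- exp (s*z)) * exp (s*z) \<partial>lborel) = 0 - (-1)"
    using \<open>0 < s\<close> by (intro lborel_integral_FTC_nonneg; auto intro!: continuous_intros)+
  then show "integrable lborel (\<lambda>z. s * exp (s*z) * exp (- exp (s*z)) * exp (s*z))"
    "(\<integral>z. s * exp (s*z) * exp (- exp (s*z)) * exp (s*z) \<partial>lborel) = 1"
    by simp_all
qed

lemma std_normal_density_mult_exp:
  "std_normal_density x * exp (t * x - t^2 / 2) = normal_density t 1 x"
proof -
  have "- ((x - 0)\<^sup>2 / (2 * 1\<^sup>2)) + (t * x - t^2 / 2) = - ((x - t)\<^sup>2 / (2 * 1\<^sup>2))"
    by (simp add: power2_eq_square field_simps)
  then show ?thesis
    unfolding normal_density_def mult.assoc exp_add[symmetric] by simp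
qed

lemma gfun_pos:
  assumes "0 < \<sigma>" "0 < x"
  shows "0 < gfun \<sigma> x"
  using assms by (simp add: gfun_def hdens_def)

lemma hdens_exp:
  assumes "0 < \<sigma>"
  shows "hdens \<sigma> (exp (\<sigma> * z)) = std_normal_density z / (\<sigma> * exp (\<sigma> * z))"
  using assms by (simp add: hdens_def normal_density_def power_divide)

lemma std_normal_density_mult_gfun_exp:
  assumes "0 < \<sigma>"
  shows "std_normal_density z * gfun \<sigma> (exp (\<sigma> * z)) = \<sigma> * exp (\<sigma> * z) * exp (- exp (\<sigma> * z))"
proof -
  have "0 < std_normal_density z" by (simp add: normal_density_pos)
  then show ?thesis
    using assms by (simp add: gfun_def hdens_exp)
qed

lemma borel_measurable_gfun[measurable]: "gfun \<sigma> \<in> borel_measurable borel"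
  unfolding gfun_def hdens_def by measurable

lemma (in prob_space) integral_gfun_exp_std_normal:
  assumes Y: "distributed M lborel Y std_normal_density" and "0 < \<sigma>"
  shows "integrable M (\<lambda>\<omega>. gfun \<sigma> (exp (\<sigma> * Y \<omega>)))" "(\<integral>\<omega>. gfun \<sigma> (exp (\<sigma> * Y \<omega>)) \<partial>M) = 1"
    and "integrable M (\<lambda>\<omega>. gfun \<sigma> (exp (\<sigma> * Y \<omega>)) * exp (\<sigma> * Y \<omega>))"
      "(\<integral>\<omega>. gfun \<sigma> (exp (\<sigma> * Y \<omega>)) * exp (\<sigma> * Y \<omega>) \<partial>M) = 1"
proof -
  let ?g = "\<lambda>z. gfun \<sigma> (exp (\<sigma> * z))"
  note dens = std_normal_density_mult_gfun_exp[OF \<open>0 < \<sigma>\<close>]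
  show "integrable M (\<lambda>\<omega>. ?g (Y \<omega>))"
    using distributed_integrable[OF Y, of ?g] gumbel_density_integral(1)[OF \<open>0 < \<sigma>\<close>]
    by (simp add: dens)
  show "(\<integral>\<omega>. ?g (Y \<omega>) \<partial>M) = 1"
    using distributed_integral[OF Y, of ?g] gumbel_density_integral(2)[OF \<open>0 < \<sigma>\<close>]
    by (simp add: dens)
  show "integrable M (\<lambda>\<omega>. ?g (Y \<omega>) * exp (\<sigma> * Y \<omega>))"
    using distributed_integrable[OF Y, of "\<lambda>z. ?g z * exp (\<sigma> * z)"]
      gumbel_density_exp_integral(1)[OF \<open>0 < \<sigma>\<close>]
    by (simp add: mult.assoc[symmetric] dens)
  show "(\<integral>\<omega>. ?g (Y \<omega>) * exp (\<sigma> * Y \<omega>) \<partial>M) = 1"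
    using distributed_integral[OF Y, of "\<lambda>z. ?g z * exp (\<sigma> * z)"]
      gumbel_density_exp_integral(2)[OF \<open>0 < \<sigma>\<close>]
    by (simp add: mult.assoc[symmetric] dens)
qed

lemma (in prob_space) integral_exp_tilt_std_normal:
  assumes Y: "distributed M lborel Y std_normal_density"
  shows "integrable M (\<lambda>\<omega>. exp (t * Y \<omega> - t^2 / 2))" "(\<integral>\<omega>. exp (t * Y \<omega> - t^2 / 2) \<partial>M) = 1"
  using distributed_integrable[OF Y, of "\<lambda>z. exp (t * z - t^2 / 2)"]
    distributed_integral[OF Y, of "\<lambda>z. exp (t * z - t^2 / 2)"]
  by (simp_all add: std_normal_density_mult_exp)

lemma (in prob_space) integral_density_gfun_exp_tilt:
  assumes Y: "distributed M lborel Y std_normal_density" and W: "distributed M lborel W std_normal_density"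
    and indep: "indep_var borel Y borel W" and "0 < \<sigma>"
  defines "N \<equiv> density M (\<lambda>\<omega>. gfun \<sigma> (exp (\<sigma> * Y \<omega>)))"
  shows "integrable N (\<lambda>\<omega>. exp (\<sigma> * Y \<omega> + (t * W \<omega> - t^2 / 2)))"
    "(\<integral>\<omega>. exp (\<sigma> * Y \<omega> + (t * W \<omega> - t^2 / 2)) \<partial>N) = 1"
proof -
  let ?U = "\<lambda>\<omega>. gfun \<sigma> (exp (\<sigma> * Y \<omega>)) * exp (\<sigma> * Y \<omega>)" and ?V = "\<lambda>\<omega>. exp (t * W \<omega> - t^2 / 2)"
  have Ym[measurable]: "Y \<in> borel_measurable M" and Wm[measurable]: "W \<in> borel_measurable M"
    using Y W by (auto dest: distributed_measurable)
  have "indep_var borel ((\<lambda>z. gfun \<sigma> (exp (\<sigma> * z)) * exp (\<sigma> * z)) \<circ> Y) borel ((\<lambda>z. exp (t * z - t^2 / 2)) \<circ> W)"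
    by (rule indep_var_compose[OF indep]) measurable
  then have UV: "indep_var borel ?U borel ?V" by (simp add: comp_def)
  note U = integral_gfun_exp_std_normal(3,4)[OF Y \<open>0 < \<sigma>\<close>] and V = integral_exp_tilt_std_normal[OF W]
  have dens: "gfun \<sigma> (exp (\<sigma> * Y \<omega>)) *\<^sub>R exp (\<sigma> * Y \<omega> + (t * W \<omega> - t^2 / 2)) = ?U \<omega> * ?V \<omega>" for \<omega>
    by (simp add: exp_add)
  have g: "(\<lambda>\<omega>. gfun \<sigma> (exp (\<sigma> * Y \<omega>))) \<in> borel_measurable M"
    by measurable
  have g_nonneg: "AE \<omega> in M. 0 \<le> gfun \<sigma> (exp (\<sigma> * Y \<omega>))"
    using gfun_pos[OF \<open>0 < \<sigma>\<close>] by (simp add: less_imp_le)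
  have f: "(\<lambda>\<omega>. exp (\<sigma> * Y \<omega> + (t * W \<omega> - t^2 / 2))) \<in> borel_measurable M"
    by measurable
  show "integrable N (\<lambda>\<omega>. exp (\<sigma> * Y \<omega> + (t * W \<omega> - t^2 / 2)))"
    unfolding N_def integrable_density[OF f g g_nonneg] dens
    using indep_var_integrable[OF UV] U V by simp
  show "(\<integral>\<omega>. exp (\<sigma> * Y \<omega> + (t * W \<omega> - t^2 / 2)) \<partial>N) = 1"
    unfolding N_def integral_density[OF f g g_nonneg] dens
    using indep_var_lebesgue_integral[OF UV] U V by simp
qed

theorem lemma4p1:
  fixes M :: "'a measure" and \<sigma> H :: real and Z B :: "real \<Rightarrow> 'a \<Rightarrow> real"
  assumes "prob_space M"
    and "\<sigma> > 0" and "3/4 < H" and "H < 1"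
    and "standard_BM M B" and "fBm M H Z"
    and "prob_space.indep_var M path_space (path Z) path_space (path B)"
  defines "S \<equiv> (\<lambda>\<alpha> \<omega>. exp (\<sigma> * (Z 1 \<omega> + (1/\<alpha>) * B 1 \<omega>) - \<sigma>^2 / (2 * \<alpha>^2)))"
    and "Pt \<equiv> density M (\<lambda>\<omega>. ennreal (gfun \<sigma> (exp (\<sigma> * Z 1 \<omega>))))"
    and "Q \<equiv> (\<lambda>\<alpha>. distr M borel (\<lambda>\<omega>. \<alpha> * Z 1 \<omega> + B 1 \<omega>))"
    and "Qt \<equiv> (\<lambda>\<alpha>. distr (density M (\<lambda>\<omega>. ennreal (gfun \<sigma> (exp (\<sigma> * Z 1 \<omega>))))) borel (\<lambda>\<omega>. \<alpha> * Z 1 \<omega> + B 1 \<omega>))"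
  shows "(prob_space Pt \<and> absolutely_continuous M Pt \<and> absolutely_continuous Pt M) \<and>
         (\<forall>\<alpha>>0. integrable Pt (S \<alpha>) \<and> (\<integral>\<omega>. S \<alpha> \<omega> \<partial>Pt) = 1) \<and>
         (\<forall>A :: real \<Rightarrow> real set. (\<forall>\<alpha>>0. A \<alpha> \<in> sets borel) \<longrightarrow>
           (((\<lambda>\<alpha>. measure (Q \<alpha>) (A \<alpha>)) \<longlongrightarrow> 0) at_top \<longleftrightarrow>
            ((\<lambda>\<alpha>. measure (Qt \<alpha>) (A \<alpha>)) \<longlongrightarrow> 0) at_top))"
proof -
  interpret prob_space M by fact
  note Z1 = fBm_distributed_one[OF \<open>fBm M H Z\<close>]
    and B1 = standard_BM_distributed_one[OF \<open>standard_BM M B\<close>]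
  have indep: "indep_var borel (Z 1) borel (B 1)"
    using assms(7) by (rule indep_var_path_eval) simp_all
  have w_pos: "0 < gfun \<sigma> (exp (\<sigma> * Z 1 \<omega>))" for \<omega>
    using \<open>\<sigma> > 0\<close> by (simp add: gfun_pos)
  note w_int = integral_gfun_exp_std_normal(1,2)[OF Z1 \<open>\<sigma> > 0\<close>]
  have "prob_space Pt \<and> absolutely_continuous M Pt \<and> absolutely_continuous Pt M"
    unfolding Pt_def using prob_space_density_equivalent[OF \<open>prob_space M\<close> w_int(1) w_pos w_int(2)] by blast
  moreover have "integrable Pt (S \<alpha>) \<and> (\<integral>\<omega>. S \<alpha> \<omega> \<partial>Pt) = 1" if "\<alpha> > 0" for \<alpha>
  proof -
    have "S \<alpha> = (\<lambda>\<omega>. exp (\<sigma> * Z 1 \<omega> + ((\<sigma>/\<alpha>) * B 1 \<omega> - (\<sigma>/\<alpha>)^2 / 2)))"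
      unfolding S_def using that by (simp add: power_divide field_simps)
    then show ?thesis
      unfolding Pt_def using integral_density_gfun_exp_tilt[OF Z1 B1 indep \<open>\<sigma> > 0\<close>, of "\<sigma>/\<alpha>"]
      by simp
  qed
  moreover have "((\<lambda>\<alpha>. measure (Q \<alpha>) (A \<alpha>)) \<longlongrightarrow> 0) at_top \<longleftrightarrow> ((\<lambda>\<alpha>. measure (Qt \<alpha>) (A \<alpha>)) \<longlongrightarrow> 0) at_top"
    if "\<forall>\<alpha>>0. A \<alpha> \<in> sets borel" for A :: "real \<Rightarrow> real set"
    unfolding Q_def Qt_def
  proof (rule tendsto_measure_distr_density_zero_iff[OF finite_measure_axioms w_int(1) w_pos])
    show "(\<lambda>\<omega>. \<alpha> * Z 1 \<omega> + B 1 \<omega>) \<in> borel_measurable M" for \<alpha>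
      using Z1 B1 by (auto dest!: distributed_measurable)
    show "\<forall>\<^sub>F \<alpha> in at_top. A \<alpha> \<in> sets borel"
      using eventually_gt_at_top[of "0::real"] by (rule eventually_mono) (use that in auto)
  qed
  ultimately show ?thesis by blast
qed

end
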